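(* Let $e_j$ be an elliptic fixed point of $\Gamma$ of order $n_{e_j}$, let $\gamma_{e_j}$ be a generator of its stabilizer $\Gamma_{e_j}$ (chosen as in the context), and let $\mathcal{K}_{e_j}:=\{\sigma^{-1}\gamma_{e_j}\sigma\mid\sigma\in\Gamma\}$ be its $\Gamma$-conjugacy class. Then for $z\in\mathbb{H}$ with $z\neq\gamma e_j$ for all $\gamma\in\Gamma$ and $s\in\mathbb{C}$ with $\mathrm{Re}(s)>1$, $$\mathcal{E}^{\mathrm{ell}}_{e_j}(z,s)=\sin\Bigl(\frac{\pi}{n_{e_j}}\Bigr)^{s}\sum_{\gamma\in\mathcal{K}_{e_j}}u(z,\gamma z)^{-s/2},\qquad u(z,w):=\frac{|z-w|^2}{4\,\mathrm{Im}(z)\mathrm{Im}(w)}.$$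
   Context: $\Gamma\subset\mathrm{PSL}_2(\mathbb{R})$ is a Fuchsian group of the first kind acting on $\mathbb{H}$. For an elliptic fixed point $e_j$ of $\Gamma$, $\Gamma_{e_j}$ is its (finite cyclic) stabilizer of order $n_{e_j}>1$, and $\sigma_{e_j}\in\mathrm{PSL}_2(\mathbb{R})$ satisfies $\sigma_{e_j}i=e_j$; the generator $\gamma_{e_j}$ of $\Gamma_{e_j}$ is such that $\sigma_{e_j}^{-1}\gamma_{e_j}\sigma_{e_j}=\begin{pmatrix}\cos(\pi/n_{e_j})&\sin(\pi/n_{e_j})\\-\sin(\pi/n_{e_j})&\cos(\pi/n_{e_j})\end{pmatrix}$. With $\varrho(z):=d_{\mathrm{hyp}}(i,z)$ (hyperbolic distance), the elliptic Eisenstein series is $\mathcal{E}^{\mathrm{ell}}_{e_j}(z,s):=\sum_{\gamma\in\Gamma_{e_j}\backslash\Gamma}\sinh\bigl(\varrho(\sigma_{e_j}^{-1}\gamma z)\bigr)^{-s}$ for $z\notin\Gamma e_j$. *)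

theory Defs
  imports "HOL-Analysis.Analysis"
begin

text \<open>Elements of PSL_2(R) are represented by the unique SL_2(R) matrix
  (a,b,c,d) (meaning [[a,b],[c,d]]) in the class {g,-g} normalised by
  c > 0, or c = 0 and d > 0.\<close>

type_synonym mat2 = "real \<times> real \<times> real \<times> real"

definition pnorm :: "mat2 \<Rightarrow> mat2" where
  "pnorm g = (case g of (a,b,c,d) \<Rightarrow>
     if c > 0 \<or> (c = 0 \<and> d > 0) then (a,b,c,d) else (-a,-b,-c,-d))"

definition psl2 :: "mat2 \<Rightarrow> bool" where
  "psl2 g = (case g of (a,b,c,d) \<Rightarrow> a*d - b*c = 1 \<and> (c > 0 \<or> (c = 0 \<and> d > 0)))"

definition mmul :: "mat2 \<Rightarrow> mat2 \<Rightarrow> mat2" where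
  "mmul g h = (case g of (a,b,c,d) \<Rightarrow> case h of (a',b',c',d') \<Rightarrow>
     (a*a' + b*c', a*b' + b*d', c*a' + d*c', c*b' + d*d'))"

definition pmul :: "mat2 \<Rightarrow> mat2 \<Rightarrow> mat2" where
  "pmul g h = pnorm (mmul g h)"

definition pinv :: "mat2 \<Rightarrow> mat2" where
  "pinv g = (case g of (a,b,c,d) \<Rightarrow> pnorm (d,-b,-c,a))"

definition pid :: mat2 where
  "pid = (1,0,0,1)"

fun ppow :: "mat2 \<Rightarrow> nat \<Rightarrow> mat2" where
  "ppow g 0 = pid"
| "ppow g (Suc k) = pmul g (ppow g k)"

definition act :: "mat2 \<Rightarrow> complex \<Rightarrow> complex" where
  "act g z = (case g of (a,b,c,d) \<Rightarrow>
     (of_real a * z + of_real b) / (of_real c * z + of_real d))"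

definition upper_half_plane :: "complex set" ("\<H>") where
  "\<H> = {z. Im z > 0}"

definition mdist :: "mat2 \<Rightarrow> mat2 \<Rightarrow> real" where
  "mdist g h = (case g of (a,b,c,d) \<Rightarrow> case h of (a',b',c',d') \<Rightarrow>
     \<bar>a-a'\<bar> + \<bar>b-b'\<bar> + \<bar>c-c'\<bar> + \<bar>d-d'\<bar>)"

definition psl2_subgroup :: "mat2 set \<Rightarrow> bool" where
  "psl2_subgroup \<Gamma> \<longleftrightarrow> (\<forall>g\<in>\<Gamma>. psl2 g) \<and> pid \<in> \<Gamma> \<and>
     (\<forall>g\<in>\<Gamma>. \<forall>h\<in>\<Gamma>. pmul g h \<in> \<Gamma>) \<and> (\<forall>g\<in>\<Gamma>. pinv g \<in> \<Gamma>)"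

text \<open>Discreteness: the identity is isolated in the subgroup (in PSL_2(R),
  a neighbourhood of the identity is the image of neighbourhoods of I and -I).\<close>
definition fuchsian :: "mat2 set \<Rightarrow> bool" where
  "fuchsian \<Gamma> \<longleftrightarrow> psl2_subgroup \<Gamma> \<and>
     (\<exists>\<epsilon>>0. \<forall>g\<in>\<Gamma>. g \<noteq> pid \<longrightarrow> mdist g (1,0,0,1) \<ge> \<epsilon> \<and> mdist g (-1,0,0,-1) \<ge> \<epsilon>)"

text \<open>First kind: the limit set is all of R \<union> {\<infinity>}; since the limit set is
  closed, it suffices that every real point is a limit point of the orbit of i.\<close>
definition fuchsian_first_kind :: "mat2 set \<Rightarrow> bool" where
  "fuchsian_first_kind \<Gamma> \<longleftrightarrow> fuchsian \<Gamma> \<and>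
     (\<forall>x::real. complex_of_real x \<in> closure ((\<lambda>g. act g \<i>) ` \<Gamma>))"

definition hyp_dist :: "complex \<Rightarrow> complex \<Rightarrow> real" where
  "hyp_dist z w = arcosh (1 + (cmod (z - w))\<^sup>2 / (2 * Im z * Im w))"

definition rho :: "complex \<Rightarrow> real" where
  "rho z = hyp_dist \<i> z"

definition u_fun :: "complex \<Rightarrow> complex \<Rightarrow> real" where
  "u_fun z w = (cmod (z - w))\<^sup>2 / (4 * Im z * Im w)"

definition stabilizer :: "mat2 set \<Rightarrow> complex \<Rightarrow> mat2 set" where
  "stabilizer \<Gamma> e = {g\<in>\<Gamma>. act g e = e}"

text \<open>Right cosets \<Gamma>_e \<gamma>, i.e. the elements of \<Gamma>_e \ \<Gamma>.\<close>
definition left_quotient :: "mat2 set \<Rightarrow> mat2 set \<Rightarrow> mat2 set set" where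
  "left_quotient H \<Gamma> = {(\<lambda>h. pmul h \<gamma>) ` H | \<gamma>. \<gamma> \<in> \<Gamma>}"

text \<open>Elliptic Eisenstein series; the summand is evaluated at a representative
  of the coset (it is independent of the choice).\<close>
definition ell_eisenstein :: "mat2 set \<Rightarrow> complex \<Rightarrow> mat2 \<Rightarrow> complex \<Rightarrow> complex \<Rightarrow> complex" where
  "ell_eisenstein \<Gamma> e \<sigma> z s =
     (\<Sum>\<^sub>\<infinity> C \<in> left_quotient (stabilizer \<Gamma> e) \<Gamma>.
        complex_of_real (sinh (rho (act (pinv \<sigma>) (act (SOME \<gamma>. \<gamma> \<in> C) z)))) powr (-s))"

definition conj_class :: "mat2 set \<Rightarrow> mat2 \<Rightarrow> mat2 set" where
  "conj_class \<Gamma> g = {pmul (pinv \<sigma>) (pmul g \<sigma>) | \<sigma>. \<sigma> \<in> \<Gamma>}"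

end

theory Submission
  imports Defs
begin

text \<open>Conjugating by sigma_e turns gamma_e into the rotation k by pi/n about i, and
  a rotation moves w by u(w, k w) = sin(pi/n)^2 sinh(rho w)^2. Since u is invariant under
  PSL_2(R), the summand of the coset Gamma_e sigma equals
  sin(pi/n)^s u(z, sigma^-1 gamma_e sigma z)^(-s/2). The map
  Gamma_e sigma |-> sigma^-1 gamma_e sigma is well defined because Gamma_e is generated by
  gamma_e, and injective because e is the only fixed point of gamma_e in the upper half-plane.\<close>

section \<open>The group PSL(2,R)\<close>

definition mdet :: "mat2 \<Rightarrow> real" where
  "mdet m = (case m of (a,b,c,d) \<Rightarrow> a*d - b*c)"

definition mneg :: "mat2 \<Rightarrow> mat2" where
  "mneg m = (case m of (a,b,c,d) \<Rightarrow> (-a,-b,-c,-d))"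

definition madj :: "mat2 \<Rightarrow> mat2" where
  "madj m = (case m of (a,b,c,d) \<Rightarrow> (d,-b,-c,a))"

lemma pnorm_cases: "pnorm m = m \<or> pnorm m = mneg m"
  by (cases m) (auto simp: pnorm_def mneg_def)

lemma pnorm_mneg: "mdet m \<noteq> 0 \<Longrightarrow> pnorm (mneg m) = pnorm m"
  by (cases m) (auto simp: pnorm_def mneg_def mdet_def)

lemma mdet_mmul: "mdet (mmul g h) = mdet g * mdet h"
  by (cases g; cases h) (simp add: mdet_def mmul_def algebra_simps)

lemma mdet_mneg[simp]: "mdet (mneg m) = mdet m"
  by (cases m) (simp add: mdet_def mneg_def)

lemma mdet_pnorm[simp]: "mdet (pnorm m) = mdet m"
  using pnorm_cases[of m] by auto

lemma mmul_mneg_left: "mmul (mneg a) b = mneg (mmul a b)"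
  by (cases a; cases b) (simp add: mneg_def mmul_def)

lemma mmul_mneg_right: "mmul a (mneg b) = mneg (mmul a b)"
  by (cases a; cases b) (simp add: mneg_def mmul_def)

lemma pnorm_mmul_pnorm_left:
  "mdet m \<noteq> 0 \<Longrightarrow> mdet k \<noteq> 0 \<Longrightarrow> pnorm (mmul (pnorm m) k) = pnorm (mmul m k)"
  using pnorm_cases[of m]
  by (auto simp: mmul_mneg_left pnorm_mneg mdet_mmul)

lemma pnorm_mmul_pnorm_right:
  "mdet m \<noteq> 0 \<Longrightarrow> mdet k \<noteq> 0 \<Longrightarrow> pnorm (mmul k (pnorm m)) = pnorm (mmul k m)"
  using pnorm_cases[of m]
  by (auto simp: mmul_mneg_right pnorm_mneg mdet_mmul)

lemma psl2_det: "psl2 g \<Longrightarrow> mdet g = 1"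
  by (cases g) (simp add: psl2_def mdet_def)

lemma pnorm_psl2: "psl2 g \<Longrightarrow> pnorm g = g"
  by (cases g) (simp add: psl2_def pnorm_def)

lemma psl2_pnorm:
  assumes "mdet m = 1" shows "psl2 (pnorm m)"
proof (cases m)
  case (fields a b c d)
  then have det: "a*d - b*c = 1" using assms by (simp add: mdet_def)
  have "c = 0 \<Longrightarrow> d \<noteq> 0" using det by auto
  then show ?thesis using fields det
    by (auto simp: pnorm_def psl2_def algebra_simps)
qed

lemma psl2_pmul[simp]: "psl2 g \<Longrightarrow> psl2 h \<Longrightarrow> psl2 (pmul g h)"
  by (simp add: pmul_def psl2_pnorm mdet_mmul psl2_det)

lemma pinv_eq_pnorm_madj: "pinv g = pnorm (madj g)"
  by (cases g) (simp add: pinv_def madj_def)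

lemma mdet_madj[simp]: "mdet (madj g) = mdet g"
  by (cases g) (simp add: mdet_def madj_def algebra_simps)

lemma psl2_pinv[simp]: "psl2 g \<Longrightarrow> psl2 (pinv g)"
  by (simp add: pinv_eq_pnorm_madj psl2_pnorm psl2_det)

lemma psl2_pid[simp]: "psl2 pid"
  by (simp add: psl2_def pid_def)

lemma pmul_assoc:
  assumes g: "psl2 g" and h: "psl2 h" and k: "psl2 k"
  shows "pmul (pmul g h) k = pmul g (pmul h k)"
proof -
  have "pmul (pmul g h) k = pnorm (mmul (mmul g h) k)"
    unfolding pmul_def using g h k by (simp add: pnorm_mmul_pnorm_left mdet_mmul psl2_det)
  also have "mmul (mmul g h) k = mmul g (mmul h k)"
    by (cases g; cases h; cases k) (simp add: mmul_def algebra_simps)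
  also have "pnorm (mmul g (mmul h k)) = pmul g (pmul h k)"
    unfolding pmul_def using g h k by (simp add: pnorm_mmul_pnorm_right mdet_mmul psl2_det)
  finally show ?thesis .
qed

lemma pmul_pid_left[simp]: "psl2 g \<Longrightarrow> pmul pid g = g"
  by (cases g) (simp add: pmul_def pid_def mmul_def pnorm_psl2)

lemma pmul_pid_right[simp]: "psl2 g \<Longrightarrow> pmul g pid = g"
  by (cases g) (simp add: pmul_def pid_def mmul_def pnorm_psl2)

lemma pmul_pinv_left[simp]:
  assumes g: "psl2 g" shows "pmul (pinv g) g = pid"
proof -
  have "pmul (pinv g) g = pnorm (mmul (madj g) g)"
    unfolding pmul_def pinv_eq_pnorm_madj using g by (simp add: pnorm_mmul_pnorm_left psl2_det)
  also have "mmul (madj g) g = pid" using psl2_det[OF g]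
    by (cases g) (simp add: mmul_def madj_def pid_def mdet_def algebra_simps)
  finally show ?thesis by (simp add: pnorm_def pid_def)
qed

lemma pmul_pinv_right[simp]:
  assumes g: "psl2 g" shows "pmul g (pinv g) = pid"
proof -
  have "pmul g (pinv g) = pnorm (mmul g (madj g))"
    unfolding pmul_def pinv_eq_pnorm_madj using g by (simp add: pnorm_mmul_pnorm_right psl2_det)
  also have "mmul g (madj g) = pid" using psl2_det[OF g]
    by (cases g) (simp add: mmul_def madj_def pid_def mdet_def algebra_simps)
  finally show ?thesis by (simp add: pnorm_def pid_def)
qed

lemma pmul_pinv_cancel_left[simp]: "psl2 g \<Longrightarrow> psl2 x \<Longrightarrow> pmul (pinv g) (pmul g x) = x"
  by (simp flip: pmul_assoc)

lemma pinv_pmul: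
  assumes g: "psl2 g" and h: "psl2 h"
  shows "pinv (pmul g h) = pmul (pinv h) (pinv g)"
proof -
  let ?x = "pmul (pinv h) (pinv g)"
  have "?x = pmul ?x (pmul (pmul g h) (pinv (pmul g h)))" using g h by simp
  also have "\<dots> = pmul (pmul ?x (pmul g h)) (pinv (pmul g h))"
    using g h by (simp only: pmul_assoc psl2_pmul psl2_pinv)
  also have "pmul ?x (pmul g h) = pid" using g h by (simp add: pmul_assoc)
  finally show ?thesis using g h by simp
qed

section \<open>Moebius action\<close>

lemma act_denom_nonzero: "psl2 (a,b,c,d) \<Longrightarrow> Im z > 0 \<Longrightarrow> of_real c * z + of_real d \<noteq> 0"
proof
  assume p: "psl2 (a,b,c,d)" and z: "Im z > 0" and e: "of_real c * z + of_real d = 0"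
  have "Im (of_real c * z + of_real d) = c * Im z" by simp
  hence "c = 0" using e z by simp
  moreover have "Re (of_real c * z + of_real d) = c * Re z + d" by simp
  ultimately have "d = 0" using e by simp
  thus False using p \<open>c = 0\<close> by (simp add: psl2_def)
qed

lemma Im_act: assumes "of_real c * z + of_real d \<noteq> 0"
  shows "Im (act (a,b,c,d) z) = (a*d - b*c) * Im z / (cmod (of_real c * z + of_real d))^2"
proof -
  have "Im (act (a,b,c,d) z) = Im ((of_real a * z + of_real b) / (of_real c * z + of_real d))"
    by (simp add: act_def)
  also have "\<dots> = (Im (of_real a * z + of_real b) * Re (of_real c * z + of_real d)
      - Re (of_real a * z + of_real b) * Im (of_real c * z + of_real d)) / (cmod (of_real c * z + of_real d))^2"
    by (simp add: Im_divide cmod_power2)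
  also have "\<dots> = (a*d - b*c) * Im z / (cmod (of_real c * z + of_real d))^2"
    by (simp add: algebra_simps)
  finally show ?thesis .
qed

lemma act_in_H: assumes "psl2 g" "z \<in> \<H>" shows "act g z \<in> \<H>"
proof (cases g)
  case (fields a b c d)
  have nz: "of_real c * z + of_real d \<noteq> 0" using act_denom_nonzero assms fields by (simp add: upper_half_plane_def)
  have det: "a*d - b*c = 1" using assms fields by (simp add: psl2_def)
  show ?thesis using Im_act[OF nz, of a b] det nz assms fields by (simp add: upper_half_plane_def)
qed

lemma act_pnorm[simp]: "act (pnorm m) z = act m z"
proof (cases m)
  case (fields a b c d)
  have e1: "- (of_real b) - of_real a * z = - (of_real a * z + of_real b)" by simp
  have e2: "- (of_real d) - of_real c * z = - (of_real c * z + of_real d)" by simp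
  have "(- (of_real b) - of_real a * z) / (- (of_real d) - of_real c * z)
      = (of_real a * z + of_real b) / (of_real c * z + of_real d)"
    unfolding e1 e2 by (rule minus_divide_divide)
  thus ?thesis using fields by (simp add: pnorm_def act_def)
qed

lemma act_mmul: assumes "of_real c' * z + of_real d' \<noteq> 0"
  shows "act (mmul (a,b,c,d) (a',b',c',d')) z = act (a,b,c,d) (act (a',b',c',d') z)"
proof -
  define A where "A = of_real a' * z + of_real b'"
  define B where "B = of_real c' * z + of_real d'"
  have B: "B \<noteq> 0" using assms B_def by simp
  have num: "of_real a * (A/B) + of_real b = (of_real a * A + of_real b * B) / B" using B by (simp add: field_simps)
  have den: "of_real c * (A/B) + of_real d = (of_real c * A + of_real d * B) / B" using B by (simp add: field_simps)
  have cancel: "((X::complex)/B) / (Y/B) = X / Y" for X Y using B by (cases "Y = 0") (simp_all add: field_simps)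
  have "act (a,b,c,d) (act (a',b',c',d') z) = (of_real a * (A/B) + of_real b) / (of_real c * (A/B) + of_real d)"
    by (simp add: act_def A_def B_def)
  also have "\<dots> = (of_real a * A + of_real b * B) / (of_real c * A + of_real d * B)" unfolding num den cancel ..
  also have "\<dots> = act (mmul (a,b,c,d) (a',b',c',d')) z"
    by (simp add: act_def mmul_def A_def B_def algebra_simps)
  finally show ?thesis ..
qed

lemma act_pmul: assumes "psl2 h" "z \<in> \<H>" shows "act (pmul g h) z = act g (act h z)"
proof (cases g; cases h)
  fix a b c d a' b' c' d' assume g: "g = (a,b,c,d)" and h: "h = (a',b',c',d')"
  have nz: "of_real c' * z + of_real d' \<noteq> 0" using act_denom_nonzero assms h by (simp add: upper_half_plane_def)
  show ?thesis using act_mmul[OF nz] g h by (simp add: pmul_def)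
qed

lemma act_pid[simp]: "act pid z = z"
  by (simp add: act_def pid_def)

lemma act_pinv_act[simp]: "psl2 g \<Longrightarrow> z \<in> \<H> \<Longrightarrow> act (pinv g) (act g z) = z"
  by (metis act_pmul act_pid pmul_pinv_left)

lemma act_act_pinv[simp]: "psl2 g \<Longrightarrow> z \<in> \<H> \<Longrightarrow> act g (act (pinv g) z) = z"
  by (metis act_pmul act_pid pmul_pinv_right psl2_pinv)

lemma u_fun_act: assumes "psl2 g" "z \<in> \<H>" "w \<in> \<H>"
  shows "u_fun (act g z) (act g w) = u_fun z w"
proof (cases g)
  case (fields a b c d)
  define A where "A = of_real c * z + of_real d"
  define B where "B = of_real c * w + of_real d"
  have nzA: "A \<noteq> 0" using act_denom_nonzero assms fields by (simp add: upper_half_plane_def A_def)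
  have nzB: "B \<noteq> 0" using act_denom_nonzero assms fields by (simp add: upper_half_plane_def B_def)
  have det: "a*d - b*c = 1" using assms fields by (simp add: psl2_def)
  have ImA: "Im (act g z) = Im z / (cmod A)^2" using Im_act[of c z d a b] nzA det fields A_def by simp
  have ImB: "Im (act g w) = Im w / (cmod B)^2" using Im_act[of c w d a b] nzB det fields B_def by simp
  have diff: "act g z - act g w = (z - w) / (A * B)"
  proof -
    have "act g z - act g w = ((of_real a * z + of_real b) * B - (of_real a * w + of_real b) * A) / (A*B)"
      using nzA nzB fields by (simp add: act_def A_def B_def field_simps)
    also have "(of_real a * z + of_real b) * B - (of_real a * w + of_real b) * A = of_real (a*d-b*c) * (z - w)"
      by (simp add: A_def B_def algebra_simps)
    finally show ?thesis using det by simp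
  qed
  have "u_fun (act g z) (act g w) = (cmod (z-w) / (cmod A * cmod B))^2 / (4 * (Im z / (cmod A)^2) * (Im w / (cmod B)^2))"
    unfolding u_fun_def diff ImA ImB by (simp add: norm_divide norm_mult)
  also have "\<dots> = u_fun z w" using nzA nzB by (simp add: u_fun_def field_simps)
  finally show ?thesis .
qed

section \<open>Rotations about i\<close>

lemma rotation_fixed_point: assumes "s \<noteq> 0" "w \<in> \<H>" "act (c, s, -s, c) w = w" shows "w = \<i>"
proof -
  have D: "of_real (-s) * w + of_real c \<noteq> 0"
  proof
    assume "of_real (-s) * w + of_real c = 0"
    hence "Im (of_real (-s) * w + of_real c) = 0" by simp
    thus False using assms by (simp add: upper_half_plane_def)
  qed
  have "(of_real c * w + of_real s) = w * (of_real (-s) * w + of_real c)"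
    using assms(3) D by (simp add: act_def field_simps)
  hence "of_real s * (w * w + 1) = 0" by (simp add: algebra_simps)
  hence "w * w + 1 = 0" using assms(1) by simp
  hence "(w - \<i>) * (w + \<i>) = 0" by (simp add: algebra_simps)
  hence "w = \<i> \<or> w = - \<i>" by (simp add: eq_neg_iff_add_eq_0)
  thus ?thesis using assms(2) by (auto simp: upper_half_plane_def)
qed

lemma u_fun_rotation: assumes "c^2 + s^2 = 1" "s > 0" "w \<in> \<H>"
  shows "u_fun w (act (c, s, -s, c) w) = s^2 * (sinh (rho w))^2"
proof -
  define D where "D = of_real (-s) * w + of_real c"
  have y: "Im w > 0" using assms by (simp add: upper_half_plane_def)
  have D: "D \<noteq> 0"
  proof
    assume "D = 0"
    hence "Im D = 0" by simp
    thus False using assms y by (simp add: D_def)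
  qed
  have ImK: "Im (act (c, s, -s, c) w) = Im w / (cmod D)^2"
    using Im_act[of "-s" w c c s] D assms(1) by (simp add: D_def power2_eq_square)
  have diff: "w - act (c, s, -s, c) w = - (of_real s * (1 + w*w) / D)"
    using D by (simp add: act_def D_def field_simps)
  have "u_fun w (act (c, s, -s, c) w) = (s * cmod (1 + w*w) / cmod D)^2 / (4 * Im w * (Im w / (cmod D)^2))"
    unfolding u_fun_def diff ImK using assms(2) by (simp add: norm_divide norm_mult)
  also have "\<dots> = s^2 * (cmod (1 + w*w))^2 / (4 * (Im w)^2)"
    using D y by (simp add: field_simps power2_eq_square)
  finally have u: "u_fun w (act (c, s, -s, c) w) = s^2 * (cmod (1 + w*w))^2 / (4 * (Im w)^2)" .
  define T where "T = 1 + (cmod (\<i> - w))\<^sup>2 / (2 * Im \<i> * Im w)"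
  have T1: "T \<ge> 1" using y by (simp add: T_def)
  have "(sinh (rho w))^2 = T^2 - 1"
  proof -
    have "rho w = arcosh T" by (simp add: rho_def hyp_dist_def T_def)
    thus ?thesis using T1 by (simp add: sinh_square_eq)
  qed
  also have "\<dots> = (cmod (1 + w*w))^2 / (4 * (Im w)^2)"
  proof -
    have a: "(cmod (\<i> - w))\<^sup>2 = (Re w)^2 + (1 - Im w)^2" by (simp add: cmod_power2)
    have b: "(cmod (1 + w*w))^2 = (1 + (Re w)^2 - (Im w)^2)^2 + (2 * Re w * Im w)^2"
      by (simp only: cmod_power2) (simp add: power2_eq_square algebra_simps)
    have T: "T = 1 + ((Re w)^2 + (1 - Im w)^2) / (2 * Im w)" using a by (simp add: T_def)
    have "T^2 - 1 = ((1 + (Re w)^2 - (Im w)^2)^2 + (2 * Re w * Im w)^2) / (4 * (Im w)^2)"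
      unfolding T using y by (simp add: field_simps) (simp add: power2_eq_square algebra_simps)
    thus ?thesis using b by simp
  qed
  finally show ?thesis using u by simp
qed

lemma powr_scaled_square: fixes t a :: real and s :: complex
  assumes "t > 0" "a \<ge> 0"
  shows "of_real t powr s * of_real (t^2 * a^2) powr (- s / 2) = of_real a powr (- s)"
proof (cases "a = 0")
  case True thus ?thesis by simp
next
  case False
  hence a: "a > 0" using assms by simp
  have "of_real t powr s * of_real (t^2 * a^2) powr (- s / 2)
      = exp (s * of_real (ln t)) * exp ((- s / 2) * of_real (ln (t^2 * a^2)))"
    using a assms Ln_of_real[of t] Ln_of_real[of "t^2*a^2"]
    by (simp add: powr_def del: of_real_mult of_real_power)
  also have "ln (t^2 * a^2) = 2 * ln t + 2 * ln a" using a assms by (simp add: ln_mult ln_realpow)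
  also have "exp (s * of_real (ln t)) * exp ((- s / 2) * of_real (2 * ln t + 2 * ln a)) = exp ((- s) * of_real (ln a))"
    by (simp add: exp_add[symmetric] algebra_simps)
  also have "\<dots> = of_real a powr (- s)" using a by (simp add: powr_def Ln_of_real)
  finally show ?thesis .
qed

lemma rho_nonneg: "w \<in> \<H> \<Longrightarrow> rho w \<ge> 0"
  unfolding rho_def hyp_dist_def upper_half_plane_def
  by (intro arcosh_nonneg_real) simp

section \<open>Conjugation and the elliptic element\<close>

definition pconj :: "mat2 \<Rightarrow> mat2 \<Rightarrow> mat2" where
  "pconj \<gamma> \<sigma> = pmul (pinv \<sigma>) (pmul \<gamma> \<sigma>)"

lemma conj_class_eq_image: "conj_class \<Gamma> \<gamma> = pconj \<gamma> ` \<Gamma>"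
  by (auto simp: conj_class_def pconj_def)

lemma act_pconj:
  "psl2 \<gamma> \<Longrightarrow> psl2 \<sigma> \<Longrightarrow> x \<in> \<H> \<Longrightarrow> act (pconj \<gamma> \<sigma>) x = act (pinv \<sigma>) (act \<gamma> (act \<sigma> x))"
  by (simp add: pconj_def act_pmul act_in_H)

lemma pconj_pmul_commuting:
  assumes "psl2 \<gamma>" "psl2 h" "psl2 \<sigma>" "pmul \<gamma> h = pmul h \<gamma>"
  shows "pconj \<gamma> (pmul h \<sigma>) = pconj \<gamma> \<sigma>"
proof -
  have "pconj \<gamma> (pmul h \<sigma>) = pmul (pinv \<sigma>) (pmul (pinv h) (pmul \<gamma> (pmul h \<sigma>)))"
    using assms by (simp add: pconj_def pinv_pmul pmul_assoc)
  also have "pmul \<gamma> (pmul h \<sigma>) = pmul h (pmul \<gamma> \<sigma>)"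
    using assms by (metis pmul_assoc)
  finally show ?thesis using assms by (simp add: pconj_def)
qed

lemma pmul_ppow_commute: "psl2 g \<Longrightarrow> pmul g (ppow g m) = pmul (ppow g m) g"
proof (induction m)
  case (Suc m)
  have "psl2 (ppow g m)" using Suc.prems by (induction m) simp_all
  then show ?case using Suc by (simp flip: pmul_assoc)
qed simp

lemma u_fun_pconj:
  assumes "psl2 \<gamma>" "psl2 d" "z \<in> \<H>"
  shows "u_fun z (act (pconj \<gamma> d) z) = u_fun (act d z) (act \<gamma> (act d z))"
proof -
  define v where "v = act \<gamma> (act d z)"
  have v: "v \<in> \<H>" using assms by (simp add: v_def act_in_H)
  have "u_fun z (act (pconj \<gamma> d) z) = u_fun z (act (pinv d) v)"
    using assms by (simp add: act_pconj v_def)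
  also have "\<dots> = u_fun (act d z) (act d (act (pinv d) v))"
    using u_fun_act[OF assms(2,3) act_in_H[OF psl2_pinv v]] assms(2) by simp
  also have "\<dots> = u_fun (act d z) v" using assms v by simp
  finally show ?thesis by (simp add: v_def)
qed

text \<open>Below, sigma plays the role of sigma_e and pnorm (c, s, -s, c) that of the
  rotation sigma_e^-1 gamma_e sigma_e.\<close>

lemma elliptic_fixed_point_unique:
  assumes "psl2 \<gamma>" "psl2 \<sigma>" "s \<noteq> 0" "pconj \<gamma> \<sigma> = pnorm (c, s, -s, c)"
    and "x \<in> \<H>" "act \<gamma> x = x"
  shows "x = act \<sigma> \<i>"
proof -
  define y where "y = act (pinv \<sigma>) x"
  have y: "y \<in> \<H>" "act \<sigma> y = x" using assms by (simp_all add: y_def act_in_H)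
  have "act (pconj \<gamma> \<sigma>) y = y" using assms(1,2,6) y by (simp add: act_pconj y_def)
  then have "act (c, s, -s, c) y = y" using assms(4) by simp
  then have "y = \<i>" using rotation_fixed_point assms(3) y(1) by blast
  then show ?thesis using y(2) by simp
qed

lemma u_fun_pconj_elliptic:
  assumes "psl2 \<gamma>" "psl2 \<sigma>" "c\<^sup>2 + s\<^sup>2 = 1" "s > 0" "pconj \<gamma> \<sigma> = pnorm (c, s, -s, c)"
    and "psl2 d" "z \<in> \<H>"
  shows "u_fun z (act (pconj \<gamma> d) z) = s\<^sup>2 * (sinh (rho (act (pinv \<sigma>) (act d z))))\<^sup>2"
proof -
  define w where "w = act (pinv \<sigma>) (act d z)"
  have w: "w \<in> \<H>" "act d z = act \<sigma> w" using assms by (simp_all add: w_def act_in_H)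
  have "u_fun z (act (pconj \<gamma> d) z) = u_fun (act \<sigma> w) (act \<gamma> (act \<sigma> w))"
    using u_fun_pconj assms w by simp
  also have "\<dots> = u_fun w (act (pconj \<gamma> \<sigma>) w)"
    using u_fun_pconj[OF assms(1,2) w(1)] by simp
  also have "\<dots> = s\<^sup>2 * (sinh (rho w))\<^sup>2"
    using u_fun_rotation assms w by simp
  finally show ?thesis by (simp add: w_def)
qed

lemma sinh_rho_powr_eq_u_fun_powr:
  assumes "psl2 \<gamma>" "psl2 \<sigma>" "c\<^sup>2 + s\<^sup>2 = 1" "s > 0" "pconj \<gamma> \<sigma> = pnorm (c, s, -s, c)"
    and "psl2 d" "z \<in> \<H>"
  shows "complex_of_real (sinh (rho (act (pinv \<sigma>) (act d z)))) powr (- t) =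
    complex_of_real s powr t * complex_of_real (u_fun z (act (pconj \<gamma> d) z)) powr (- t / 2)"
proof -
  define w where "w = act (pinv \<sigma>) (act d z)"
  have "sinh (rho w) \<ge> 0" using rho_nonneg act_in_H assms by (simp add: w_def)
  then show ?thesis
    unfolding u_fun_pconj_elliptic[OF assms] w_def[symmetric]
    by (rule powr_scaled_square[OF assms(4), symmetric])
qed

section \<open>Cosets of the stabilizer\<close>

definition rcoset :: "mat2 set \<Rightarrow> mat2 \<Rightarrow> mat2 set" where
  "rcoset H g = (\<lambda>h. pmul h g) ` H"

lemma left_quotient_eq_image: "left_quotient H \<Gamma> = rcoset H ` \<Gamma>"
  by (auto simp: left_quotient_def rcoset_def)

lemma psl2_subgroup_stabilizer:
  assumes "psl2_subgroup \<Gamma>" "e \<in> \<H>"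
  shows "psl2_subgroup (stabilizer \<Gamma> e)"
  using assms by (auto simp: psl2_subgroup_def stabilizer_def act_pmul)
    (metis act_pinv_act)

lemma rcoset_pmul:
  assumes H: "psl2_subgroup H" and h: "h \<in> H" and g: "psl2 g"
  shows "rcoset H (pmul h g) = rcoset H g"
proof -
  have HP: "psl2 x" and Hmul: "x \<in> H \<Longrightarrow> y \<in> H \<Longrightarrow> pmul x y \<in> H"
    and Hinv: "pinv x \<in> H" if "x \<in> H" for x y
    using H that by (simp_all add: psl2_subgroup_def)
  show ?thesis unfolding rcoset_def
  proof (intro equalityI subsetI; elim imageE)
    fix y x assume x: "x \<in> H" and y: "y = pmul x (pmul h g)"
    then have "y = pmul (pmul x h) g" using HP h g by (simp add: pmul_assoc)
    then show "y \<in> (\<lambda>x. pmul x g) ` H" using Hmul x h by blast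
  next
    fix y x assume x: "x \<in> H" and y: "y = pmul x g"
    then have "y = pmul (pmul x (pinv h)) (pmul h g)" using HP h g by (simp add: pmul_assoc)
    then show "y \<in> (\<lambda>x. pmul x (pmul h g)) ` H" using Hmul Hinv x h by blast
  qed
qed

lemma some_in_rcoset:
  assumes "psl2_subgroup H" "psl2 g"
  obtains h where "h \<in> H" "(SOME x. x \<in> rcoset H g) = pmul h g"
proof -
  have "pmul pid g \<in> rcoset H g" using assms(1) by (auto simp: rcoset_def psl2_subgroup_def)
  then have "(SOME x. x \<in> rcoset H g) \<in> rcoset H g" by (rule someI)
  then show ?thesis using that by (auto simp: rcoset_def)
qed

lemma pconj_eq_imp_stabilizer:
  assumes \<Gamma>: "psl2_subgroup \<Gamma>" "\<sigma>\<^sub>1 \<in> \<Gamma>" "\<sigma>\<^sub>2 \<in> \<Gamma>"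
    and \<gamma>: "psl2 \<gamma>" "e \<in> \<H>" "act \<gamma> e = e"
    and fixed_pt: "\<And>x. x \<in> \<H> \<Longrightarrow> act \<gamma> x = x \<Longrightarrow> x = e"
    and eq: "pconj \<gamma> \<sigma>\<^sub>1 = pconj \<gamma> \<sigma>\<^sub>2"
  shows "pmul \<sigma>\<^sub>2 (pinv \<sigma>\<^sub>1) \<in> stabilizer \<Gamma> e"
proof -
  have P: "psl2 \<sigma>\<^sub>1" "psl2 \<sigma>\<^sub>2" using \<Gamma> by (auto simp: psl2_subgroup_def)
  define y where "y = act (pinv \<sigma>\<^sub>1) e"
  have y: "y \<in> \<H>" "act \<sigma>\<^sub>2 y \<in> \<H>" using P \<gamma> by (simp_all add: y_def act_in_H)
  have "act (pconj \<gamma> \<sigma>\<^sub>1) y = y" using P \<gamma> y by (simp add: act_pconj y_def)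
  then have "act (pinv \<sigma>\<^sub>2) (act \<gamma> (act \<sigma>\<^sub>2 y)) = y" using eq P \<gamma>(1) y(1) by (simp add: act_pconj)
  then have "act \<gamma> (act \<sigma>\<^sub>2 y) = act \<sigma>\<^sub>2 y"
    using P \<gamma>(1) y by (metis act_act_pinv act_in_H)
  then have "act \<sigma>\<^sub>2 y = e" using fixed_pt y(2) by blast
  then have "act (pmul \<sigma>\<^sub>2 (pinv \<sigma>\<^sub>1)) e = e" using \<gamma>(2) P by (simp add: act_pmul y_def)
  then show ?thesis using \<Gamma> by (simp add: stabilizer_def psl2_subgroup_def)
qed

theorem bij_betw_left_quotient_conj_class:
  assumes \<Gamma>: "psl2_subgroup \<Gamma>" and e: "e \<in> \<H>" and \<gamma>: "\<gamma> \<in> stabilizer \<Gamma> e"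
    and comm: "\<And>h. h \<in> stabilizer \<Gamma> e \<Longrightarrow> pmul \<gamma> h = pmul h \<gamma>"
    and fixed_pt: "\<And>x. x \<in> \<H> \<Longrightarrow> act \<gamma> x = x \<Longrightarrow> x = e"
  shows "bij_betw (\<lambda>C. pconj \<gamma> (SOME \<sigma>. \<sigma> \<in> C)) (left_quotient (stabilizer \<Gamma> e) \<Gamma>) (conj_class \<Gamma> \<gamma>)"
proof -
  define S where "S = stabilizer \<Gamma> e"
  have S: "psl2_subgroup S" using psl2_subgroup_stabilizer[OF \<Gamma> e] by (simp add: S_def)
  have P: "psl2 g" if "g \<in> \<Gamma>" for g using \<Gamma> that by (simp add: psl2_subgroup_def)
  have \<gamma>': "psl2 \<gamma>" "act \<gamma> e = e" using \<gamma> P by (auto simp: stabilizer_def)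
  have rep: "pconj \<gamma> (SOME x. x \<in> rcoset S \<sigma>) = pconj \<gamma> \<sigma>" if \<sigma>: "\<sigma> \<in> \<Gamma>" for \<sigma>
  proof -
    obtain h where h: "h \<in> S" "(SOME x. x \<in> rcoset S \<sigma>) = pmul h \<sigma>"
      using some_in_rcoset[OF S P[OF \<sigma>]] .
    have "psl2 h" using S h(1) by (simp add: psl2_subgroup_def)
    then show ?thesis
      using pconj_pmul_commuting[OF \<gamma>'(1) _ P[OF \<sigma>] comm] h by (simp add: S_def)
  qed
  have "rcoset S \<sigma>\<^sub>1 = rcoset S \<sigma>\<^sub>2"
    if \<sigma>: "\<sigma>\<^sub>1 \<in> \<Gamma>" "\<sigma>\<^sub>2 \<in> \<Gamma>"
      and eq: "pconj \<gamma> (SOME x. x \<in> rcoset S \<sigma>\<^sub>1) = pconj \<gamma> (SOME x. x \<in> rcoset S \<sigma>\<^sub>2)"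
    for \<sigma>\<^sub>1 \<sigma>\<^sub>2
  proof -
    have "pmul \<sigma>\<^sub>2 (pinv \<sigma>\<^sub>1) \<in> S"
      using pconj_eq_imp_stabilizer[OF \<Gamma> \<sigma> \<gamma>'(1) e \<gamma>'(2) fixed_pt] eq rep \<sigma> by (simp add: S_def)
    then have "rcoset S (pmul (pmul \<sigma>\<^sub>2 (pinv \<sigma>\<^sub>1)) \<sigma>\<^sub>1) = rcoset S \<sigma>\<^sub>1"
      using rcoset_pmul S P \<sigma> by blast
    then show ?thesis using P \<sigma> by (simp add: pmul_assoc)
  qed
  then have "inj_on (\<lambda>C. pconj \<gamma> (SOME x. x \<in> C)) (rcoset S ` \<Gamma>)"
    by (auto simp: inj_on_def)
  moreover have "(\<lambda>C. pconj \<gamma> (SOME x. x \<in> C)) ` rcoset S ` \<Gamma> = pconj \<gamma> ` \<Gamma>"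
    using rep by (simp add: image_image cong: image_cong)
  ultimately show ?thesis
    by (simp add: bij_betw_def left_quotient_eq_image conj_class_eq_image S_def)
qed

lemma some_left_quotient_in:
  assumes "psl2_subgroup \<Gamma>" "e \<in> \<H>" "C \<in> left_quotient (stabilizer \<Gamma> e) \<Gamma>"
  shows "(SOME \<sigma>. \<sigma> \<in> C) \<in> \<Gamma>"
proof -
  obtain g where g: "g \<in> \<Gamma>" "C = rcoset (stabilizer \<Gamma> e) g"
    using assms(3) by (auto simp: left_quotient_eq_image)
  obtain h where "h \<in> stabilizer \<Gamma> e" "(SOME \<sigma>. \<sigma> \<in> C) = pmul h g"
    using some_in_rcoset psl2_subgroup_stabilizer assms g by (metis psl2_subgroup_def)
  then show ?thesis using assms(1) g by (auto simp: psl2_subgroup_def stabilizer_def)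
qed

section \<open>The elliptic Eisenstein series\<close>

theorem lemma3p3:
  fixes \<Gamma> :: "mat2 set" and e z s :: complex and n :: nat and \<sigma>e \<gamma>e :: mat2
  assumes "fuchsian_first_kind \<Gamma>"
    and "e \<in> \<H>"
    and "finite (stabilizer \<Gamma> e)" and "card (stabilizer \<Gamma> e) = n" and "n > 1"
    and "\<gamma>e \<in> stabilizer \<Gamma> e" and "stabilizer \<Gamma> e = range (ppow \<gamma>e)"
    and "psl2 \<sigma>e" and "act \<sigma>e \<i> = e"
    and "pmul (pinv \<sigma>e) (pmul \<gamma>e \<sigma>e) =
           pnorm (cos (pi / n), sin (pi / n), - sin (pi / n), cos (pi / n))"
    and "z \<in> \<H>" and "\<forall>\<gamma>\<in>\<Gamma>. z \<noteq> act \<gamma> e"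
    and "Re s > 1"
  shows "ell_eisenstein \<Gamma> e \<sigma>e z s =
           complex_of_real (sin (pi / n)) powr s *
           (\<Sum>\<^sub>\<infinity> \<gamma> \<in> conj_class \<Gamma> \<gamma>e. complex_of_real (u_fun z (act \<gamma> z)) powr (- s / 2))"
proof -
  define F where "F \<gamma> = complex_of_real (u_fun z (act \<gamma> z)) powr (- s / 2)" for \<gamma>
  define rep where "rep C = (SOME \<sigma>. \<sigma> \<in> C)" for C :: "mat2 set"
  define sn where "sn = sin (pi / n)"
  let ?L = "left_quotient (stabilizer \<Gamma> e) \<Gamma>"
  have \<Gamma>: "psl2_subgroup \<Gamma>" using assms(1) by (simp add: fuchsian_first_kind_def fuchsian_def)
  have \<gamma>: "psl2 \<gamma>e" using assms(6) \<Gamma> by (auto simp: stabilizer_def psl2_subgroup_def)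
  have rot: "pconj \<gamma>e \<sigma>e = pnorm (cos (pi / n), sn, - sn, cos (pi / n))"
    using assms(10) by (simp add: pconj_def sn_def)
  have sn: "sn > 0" unfolding sn_def using assms(5) by (intro sin_gt_zero) (simp_all add: field_simps)
  have fixed_pt: "x = e" if "x \<in> \<H>" "act \<gamma>e x = x" for x
    using elliptic_fixed_point_unique[OF \<gamma> assms(8) _ rot that] sn assms(9) by simp
  have comm: "pmul \<gamma>e h = pmul h \<gamma>e" if "h \<in> stabilizer \<Gamma> e" for h
    using that assms(7) pmul_ppow_commute[OF \<gamma>] by auto
  have summand: "complex_of_real (sinh (rho (act (pinv \<sigma>e) (act (rep C) z)))) powr (- s)
      = complex_of_real sn powr s * F (pconj \<gamma>e (rep C))" if "C \<in> ?L" for C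
  proof -
    have "psl2 (rep C)"
      using some_left_quotient_in[OF \<Gamma> assms(2) that] \<Gamma> by (simp add: rep_def psl2_subgroup_def)
    moreover have "(cos (pi / n))\<^sup>2 + sn\<^sup>2 = 1" by (simp add: sn_def)
    ultimately show ?thesis
      using sinh_rho_powr_eq_u_fun_powr[OF \<gamma> assms(8) _ sn rot _ assms(11)] by (simp add: F_def)
  qed
  have "ell_eisenstein \<Gamma> e \<sigma>e z s = (\<Sum>\<^sub>\<infinity> C \<in> ?L. complex_of_real sn powr s * F (pconj \<gamma>e (rep C)))"
    unfolding ell_eisenstein_def using summand by (intro infsum_cong) (simp add: rep_def)
  also have "\<dots> = complex_of_real sn powr s * (\<Sum>\<^sub>\<infinity> C \<in> ?L. F (pconj \<gamma>e (rep C)))"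
    by (rule infsum_cmult_right')
  also have "(\<Sum>\<^sub>\<infinity> C \<in> ?L. F (pconj \<gamma>e (rep C))) = (\<Sum>\<^sub>\<infinity> \<gamma> \<in> conj_class \<Gamma> \<gamma>e. F \<gamma>)"
    using bij_betw_left_quotient_conj_class[OF \<Gamma> assms(2,6) comm fixed_pt]
    unfolding rep_def by (rule infsum_reindex_bij_betw)
  finally show ?thesis by (simp add: sn_def F_def)
qed

end
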